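(* Let $d\geq 2$ and $U=(u_{ij})_{i,j=1}^d\in\mathcal{U}_d(\mathbb{C})$ be such that $$\min_i\max_j|u_{ij}|^2>\sqrt{\frac{1+\frac{1}{\sqrt d}}{2}}.$$ Then there are no $l\in\{1,\dots,d\}$ and $D_1,D_2\in\mathcal{DU}_d(\mathbb{C})$ such that $D_2U^\dagger D_1U|l\rangle$ is maximally mutually coherent; i.e., Alice and Bob cannot generate a maximally mutually coherent state with just three strokes of the coherence engine.
   Context: $\mathcal{U}_d(\mathbb{C})$ denotes the group of $d\times d$ unitary matrices and $\mathcal{DU}_d(\mathbb{C})$ its subgroup of diagonal unitary matrices; $\{|j\rangle\}$ is the computational basis (Alice's basis) and Bob's basis is $\{U^\dagger|j\rangle\}$. Alice's free operations are $\mathcal{DU}_d(\mathbb{C})$ and Bob's are $\{U^\dagger DU:D\in\mathcal{DU}_d(\mathbb{C})\}$; a three-stroke protocol consists of Alice preparing $|l\rangle$, Bob applying $U^\dagger D_1U$, Alice applying $D_2$. A pure state $|\psi\rangle$ is maximally mutually coherent if $|\langle j|\psi\rangle|=|\langle j|U|\psi\rangle|=1/\sqrt d$ for all $j$. *)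

theory Defs
  imports "HOL-Analysis.Analysis"
begin

text \<open>d x d complex matrices are indexed by a finite type 'n with d = CARD('n).\<close>

definition cadjoint :: "complex^'n^'m \<Rightarrow> complex^'m^'n" where
  "cadjoint A = (\<chi> i j. cnj (A $ j $ i))"

definition unitary_mat :: "complex^'n^'n \<Rightarrow> bool" where
  "unitary_mat U \<longleftrightarrow> cadjoint U ** U = mat 1 \<and> U ** cadjoint U = mat 1"

definition diag_unitary :: "(complex^'n^'n) set" where
  "diag_unitary = {D. unitary_mat D \<and> (\<forall>i j. i \<noteq> j \<longrightarrow> D $ i $ j = 0)}"

definition ket :: "'n::finite \<Rightarrow> complex^'n" where
  "ket l = axis l 1"

text \<open>Maximal mutual coherence w.r.t. Alice's basis {|j>} and Bob's basis {U^dagger |j>}.\<close>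
definition max_mut_coherent :: "complex^'n^'n \<Rightarrow> complex^'n \<Rightarrow> bool" where
  "max_mut_coherent U psi \<longleftrightarrow>
     (\<forall>j. cmod (psi $ j) = 1 / sqrt (real CARD('n))) \<and>
     (\<forall>j. cmod ((U *v psi) $ j) = 1 / sqrt (real CARD('n)))"

end

theory Submission
  imports Defs
begin

(* Put a = 1 / sqrt d. As x <= sqrt x on [0, 1], every row of U has an entry with
   |u_ij|^2 > (1 + a) / 2 >= 1/2. Two such entries cannot lie in the same column, since the
   columns of U are unit vectors; so they sit at the positions of a permutation, and every
   column l contains one as well, |u_kl|^2 = w > (1 + a) / 2. The l-th coordinate of
   D2 U^* D1 U |l> has modulus |sum_k |u_kl|^2 (D1)_kk|, a convex combination of unimodular
   numbers with one weight w, hence of modulus at least 2 w - 1 > a. So the state is not even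
   maximally coherent in Alice's basis. *)

lemma matrix_vector_mult_ket_component: "(A *v ket l) $ i = A $ i $ l"
  by (simp add: ket_def matrix_vector_mult_def axis_def if_distrib cong: if_cong)

lemma diagonal_matrix_mult_left:
  fixes D A :: "'a::semiring_1^'n::finite^'n"
  assumes "\<And>i j. i \<noteq> j \<Longrightarrow> D $ i $ j = 0"
  shows "(D ** A) $ i $ j = D $ i $ i * A $ i $ j"
proof -
  have "(D ** A) $ i $ j = (\<Sum>k\<in>UNIV. D $ i $ k * A $ k $ j)"
    by (simp add: matrix_matrix_mult_def)
  also have "\<dots> = D $ i $ i * A $ i $ j"
    by (subst sum.remove[of UNIV i]) (auto intro!: sum.neutral simp: assms)
  finally show ?thesis .
qed

lemma diagonal_matrix_mult_right:
  fixes D A :: "'a::semiring_1^'n::finite^'n"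
  assumes "\<And>i j. i \<noteq> j \<Longrightarrow> D $ i $ j = 0"
  shows "(A ** D) $ i $ j = A $ i $ j * D $ j $ j"
proof -
  have "(A ** D) $ i $ j = (\<Sum>k\<in>UNIV. A $ i $ k * D $ k $ j)"
    by (simp add: matrix_matrix_mult_def)
  also have "\<dots> = A $ i $ j * D $ j $ j"
    by (subst sum.remove[of UNIV j]) (auto intro!: sum.neutral simp: assms)
  finally show ?thesis .
qed

lemma diag_unitary_offdiag: "D \<in> diag_unitary \<Longrightarrow> i \<noteq> j \<Longrightarrow> D $ i $ j = 0"
  by (simp add: diag_unitary_def)

lemma unitary_column_norm_sum:
  assumes "unitary_mat U"
  shows "(\<Sum>k\<in>UNIV. (cmod (U $ k $ l))\<^sup>2) = 1"
proof -
  have "(\<Sum>k\<in>UNIV. cnj (U $ k $ l) * U $ k $ l) = (cadjoint U ** U) $ l $ l"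
    by (simp add: matrix_matrix_mult_def cadjoint_def)
  also have "\<dots> = 1"
    using assms by (simp add: unitary_mat_def mat_def)
  finally have "complex_of_real (\<Sum>k\<in>UNIV. (cmod (U $ k $ l))\<^sup>2) = 1"
    unfolding of_real_sum by (simp add: complex_norm_square mult.commute del: of_real_power)
  then show ?thesis
    using of_real_eq_1_iff by blast
qed

lemma diag_unitary_diagonal_norm:
  assumes "D \<in> diag_unitary"
  shows "cmod (D $ i $ i) = 1"
proof -
  have "(cmod (D $ i $ i))\<^sup>2 = (\<Sum>k\<in>UNIV. (cmod (D $ k $ i))\<^sup>2)"
    by (subst sum.remove[of UNIV i]) (auto intro!: sum.neutral simp: diag_unitary_offdiag[OF assms])
  also have "\<dots> = 1"
    using assms by (simp add: diag_unitary_def unitary_column_norm_sum)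
  finally show ?thesis
    using norm_ge_zero[of "D $ i $ i"] by (auto simp: power2_eq_1_iff)
qed

lemma norm_sum_scaleR_unit_ge:
  fixes z :: "'i \<Rightarrow> 'a::real_normed_vector"
  assumes "finite S" "k \<in> S"
    and "\<And>i. i \<in> S \<Longrightarrow> 0 \<le> w i" "sum w S = 1"
    and "\<And>i. i \<in> S \<Longrightarrow> norm (z i) = 1"
  shows "2 * w k - 1 \<le> norm (\<Sum>i\<in>S. w i *\<^sub>R z i)"
proof -
  have rest: "norm (\<Sum>i\<in>S - {k}. w i *\<^sub>R z i) \<le> 1 - w k"
  proof -
    have "norm (\<Sum>i\<in>S - {k}. w i *\<^sub>R z i) \<le> (\<Sum>i\<in>S - {k}. norm (w i *\<^sub>R z i))"
      by (rule norm_sum)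
    also have "\<dots> = sum w (S - {k})"
      using assms(3,5) by (intro sum.cong) auto
    also have "\<dots> = 1 - w k"
      using assms(1,2,4) by (simp add: sum_diff1)
    finally show ?thesis .
  qed
  have head: "norm (w k *\<^sub>R z k) = w k"
    using assms(2,3,5) by simp
  have split: "(\<Sum>i\<in>S. w i *\<^sub>R z i) = w k *\<^sub>R z k + (\<Sum>i\<in>S - {k}. w i *\<^sub>R z i)"
    using assms(1,2) by (rule sum.remove)
  have "norm (w k *\<^sub>R z k) - norm (\<Sum>i\<in>S - {k}. w i *\<^sub>R z i)
      \<le> norm (w k *\<^sub>R z k + (\<Sum>i\<in>S - {k}. w i *\<^sub>R z i))"
    by (rule norm_diff_ineq)
  then show ?thesis
    unfolding split using head rest by linarith
qed

lemma three_stroke_amplitude_ge: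
  assumes "unitary_mat U" "D1 \<in> diag_unitary" "D2 \<in> diag_unitary"
  shows "2 * (cmod (U $ k $ l))\<^sup>2 - 1 \<le> cmod (((D2 ** cadjoint U ** D1 ** U) *v ket l) $ l)"
proof -
  have "(cadjoint U ** D1 ** U) $ l $ l = (\<Sum>m\<in>UNIV. (cadjoint U ** D1) $ l $ m * U $ m $ l)"
    by (simp add: matrix_matrix_mult_def)
  also have "\<dots> = (\<Sum>m\<in>UNIV. (cmod (U $ m $ l))\<^sup>2 *\<^sub>R D1 $ m $ m)"
    by (intro sum.cong) (simp_all add: diagonal_matrix_mult_right
        diag_unitary_offdiag[OF assms(2)] cadjoint_def scaleR_conv_of_real complex_norm_square mult_ac del: of_real_power)
  moreover have "D2 ** cadjoint U ** D1 ** U = D2 ** (cadjoint U ** D1 ** U)"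
    by (simp add: matrix_mul_assoc)
  ultimately have "((D2 ** cadjoint U ** D1 ** U) *v ket l) $ l
      = D2 $ l $ l * (\<Sum>m\<in>UNIV. (cmod (U $ m $ l))\<^sup>2 *\<^sub>R D1 $ m $ m)"
    by (simp add: matrix_vector_mult_ket_component diagonal_matrix_mult_left
        diag_unitary_offdiag[OF assms(3)])
  moreover have "2 * (cmod (U $ k $ l))\<^sup>2 - 1 \<le> cmod (\<Sum>m\<in>UNIV. (cmod (U $ m $ l))\<^sup>2 *\<^sub>R D1 $ m $ m)"
    using assms(1,2) by (intro norm_sum_scaleR_unit_ge)
      (auto simp: unitary_column_norm_sum diag_unitary_diagonal_norm)
  ultimately show ?thesis
    by (simp add: norm_mult diag_unitary_diagonal_norm[OF assms(3)])
qed

lemma unitary_column_has_dominant_entry: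
  assumes "unitary_mat U" "1 / 2 \<le> t"
    and "\<And>i. \<exists>j. t < (cmod (U $ i $ j))\<^sup>2"
  shows "\<exists>k. t < (cmod (U $ k $ l))\<^sup>2"
proof -
  obtain \<sigma> where \<sigma>: "\<And>i. t < (cmod (U $ i $ \<sigma> i))\<^sup>2"
    using assms(3) by metis
  have "inj \<sigma>"
  proof (rule injI, rule ccontr)
    fix x y assume same_column: "\<sigma> x = \<sigma> y" and "x \<noteq> y"
    have "(\<Sum>k\<in>{x, y}. (cmod (U $ k $ \<sigma> x))\<^sup>2) \<le> (\<Sum>k\<in>UNIV. (cmod (U $ k $ \<sigma> x))\<^sup>2)"
      by (rule sum_mono2) auto
    also have "\<dots> = 1"
      using assms(1) by (rule unitary_column_norm_sum)
    finally have "(cmod (U $ x $ \<sigma> x))\<^sup>2 + (cmod (U $ y $ \<sigma> y))\<^sup>2 \<le> 1"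
      using \<open>x \<noteq> y\<close> same_column by simp
    with \<sigma>[of x] \<sigma>[of y] assms(2) show False
      by argo
  qed
  then have "surj \<sigma>"
    by (simp add: finite_UNIV_inj_surj)
  then obtain k where "\<sigma> k = l"
    by (metis surj_f_inv_f)
  then show ?thesis
    using \<sigma>[of k] by blast
qed

lemma less_Min_Max_rangeD:
  fixes f :: "'i::finite \<Rightarrow> 'j::finite \<Rightarrow> 'a::linorder"
  assumes "c < Min (range (\<lambda>i. Max (range (f i))))"
  shows "\<exists>j. c < f i j"
proof -
  have "Max (range (f i)) \<in> range (f i)"
    by (rule Max_in) simp_all
  then obtain j where j: "Max (range (f i)) = f i j"
    by blast
  note assms
  also have "Min (range (\<lambda>i. Max (range (f i)))) \<le> Max (range (f i))"
    by (rule Min_le) simp_all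
  finally show ?thesis
    unfolding j by blast
qed

theorem corollary15:
  fixes U :: "complex^'n::finite^'n"
  assumes "CARD('n) \<ge> 2"
    and "unitary_mat U"
    and "Min (range (\<lambda>i. Max (range (\<lambda>j. (cmod (U $ i $ j))^2))))
           > sqrt ((1 + 1 / sqrt (real CARD('n))) / 2)"
  shows "\<not> (\<exists>l D1 D2. D1 \<in> diag_unitary \<and> D2 \<in> diag_unitary \<and>
             max_mut_coherent U ((D2 ** cadjoint U ** D1 ** U) *v ket l))"
proof
  assume "\<exists>l D1 D2. D1 \<in> diag_unitary \<and> D2 \<in> diag_unitary \<and>
             max_mut_coherent U ((D2 ** cadjoint U ** D1 ** U) *v ket l)"
  then obtain l D1 D2 where D: "D1 \<in> diag_unitary" "D2 \<in> diag_unitary"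
    and coherent: "max_mut_coherent U ((D2 ** cadjoint U ** D1 ** U) *v ket l)"
    by blast
  define a where "a = 1 / sqrt (real CARD('n))"
  have "0 \<le> a" "a \<le> 1"
    by (simp_all add: a_def)
  then have "a * a \<le> 1"
    using mult_le_one[of a a] by simp
  then have "(1 + a) / 2 \<le> sqrt ((1 + a) / 2)"
    by (intro real_le_rsqrt) (simp add: power2_eq_square algebra_simps)
  with assms(3) have "(1 + a) / 2 < Min (range (\<lambda>i. Max (range (\<lambda>j. (cmod (U $ i $ j))\<^sup>2))))"
    unfolding a_def by linarith
  then have "\<exists>j. (1 + a) / 2 < (cmod (U $ i $ j))\<^sup>2" for i
    by (rule less_Min_Max_rangeD)
  moreover have "1 / 2 \<le> (1 + a) / 2"
    using \<open>0 \<le> a\<close> by simp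
  ultimately obtain k where "(1 + a) / 2 < (cmod (U $ k $ l))\<^sup>2"
    using unitary_column_has_dominant_entry[OF assms(2)] by blast
  then have "a < cmod (((D2 ** cadjoint U ** D1 ** U) *v ket l) $ l)"
    using three_stroke_amplitude_ge[OF assms(2) D, of k l] by (simp add: field_simps)
  with coherent show False
    by (simp add: max_mut_coherent_def a_def)
qed

end
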